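(* Let $f=(z,u_0)\in\mathcal Y'$ and $\widehat u\in\mathcal X$. Then for all $\boldsymbol y\in U$ and $\boldsymbol\nu\in\mathscr F$, $$|\partial^{\boldsymbol\nu}_{\boldsymbol y}\Phi^{\boldsymbol y}|\le\frac{\alpha_1+\alpha_2\|E_T\|^2_{\mathcal X\to L^2(D)}}{2}\Big(\frac{\|f\|_{\mathcal Y'}}{\beta_1}+\|\widehat u\|_{\mathcal X}\Big)^2(|\boldsymbol\nu|+1)!\,\boldsymbol b^{\boldsymbol\nu}.$$
   Context: Setting. $D\subset\mathbb R^d$ ($d\in\{1,2,3\}$) is a bounded Lipschitz domain, $I=[0,T]$ with $0<T<\infty$, and $U=[-\frac12,\frac12]^{\mathbb N}$. The diffusion coefficient is $a^{\boldsymbol y}(\boldsymbol x,t)=a_0(\boldsymbol x,t)+\sum_{j\ge1}y_j\psi_j(\boldsymbol x,t)$, where for a.e. $t\in I$, $a_0(\cdot,t),\psi_j(\cdot,t)\in L^\infty(D)$, $(\sup_{t\in I}\|\psi_j(\cdot,t)\|_{L^\infty(D)})_{j\ge1}\in\ell^1$, $t\mapsto a^{\boldsymbol y}(\boldsymbol x,t)$ is measurable, and there are constants $0<a_{\min}\le a_{\max}<\infty$ with $a_{\min}\le a^{\boldsymbol y}(\boldsymbol x,t)\le a_{\max}$ for all $\boldsymbol x\in D$, $\boldsymbol y\in U$, a.e. $t\in I$. $V=H^1_0(D)$ with $\langle v_1,v_2\rangle_V=\langle\nabla v_1,\nabla v_2\rangle_{L^2(D)}$, $V'=H^{-1}(D)$.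 $\mathcal X=\{v\in L^2(V;I):\partial_tv\in L^2(V';I)\}$ with $\|v\|_{\mathcal X}^2=\|v\|^2_{L^2(V;I)}+\|\partial_tv\|^2_{L^2(V';I)}$; $\mathcal Y'=L^2(V';I)\times L^2(D)$ with the product norm. For $\boldsymbol y\in U$ the operator $B^{\boldsymbol y}:\mathcal X\to\mathcal Y'$ is defined by $\langle B^{\boldsymbol y}w,(v_1,v_2)\rangle=\int_I\langle\partial_tw,v_1\rangle_{V',V}\,\mathrm dt+\int_I\int_Da^{\boldsymbol y}\nabla w\cdot\nabla v_1\,\mathrm d\boldsymbol x\,\mathrm dt+\int_Dw(\cdot,0)v_2\,\mathrm d\boldsymbol x$ for $(v_1,v_2)\in L^2(V;I)\times L^2(D)$. Each $B^{\boldsymbol y}$ is an isomorphism and there is $\beta_1>0$ with $\sup_{\boldsymbol y\in U}\|(B^{\boldsymbol y})^{-1}\|_{\mathcal Y'\to\mathcal X}\le1/\beta_1$. For $f=(z,u_0)\in\mathcal Y'$ the state is $u^{\boldsymbol y}=(B^{\boldsymbol y})^{-1}f\in\mathcal X$. $E_T:\mathcal X\to L^2(D)$, $v\mapsto v(\cdot,T)$, is bounded. $b_j=\beta_1^{-1}\sup_{t\in I}\|\psi_j(\cdot,t)\|_{L^\infty(D)}$; $\mathscr F$ is the set of finitely supported multi-indices, $|\boldsymbol\nu|=\sum_j\nu_j$, $\boldsymbol b^{\boldsymbol\nu}=\prod_jb_j^{\nu_j}$, $\partial^{\boldsymbol\nu}_{\boldsymbol y}=\prod_j(\partial/\partial y_j)^{\nu_j}$.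 It is known that $\|\partial^{\boldsymbol\nu}_{\boldsymbol y}u^{\boldsymbol y}\|_{\mathcal X}\le\frac{\|f\|_{\mathcal Y'}}{\beta_1}|\boldsymbol\nu|!\,\boldsymbol b^{\boldsymbol\nu}$. Fix $\alpha_1,\alpha_2\ge0$ with $\alpha_1+\alpha_2>0$ and let $\Phi^{\boldsymbol y}:=\frac{\alpha_1}{2}\|u^{\boldsymbol y}-\widehat u\|^2_{L^2(V;I)}+\frac{\alpha_2}{2}\|E_T(u^{\boldsymbol y}-\widehat u)\|^2_{L^2(D)}$. *)

theory Defs
  imports "HOL-Analysis.Analysis"
begin

definition Upar :: "(nat \<Rightarrow> real) set" where
  "Upar = {y. \<forall>j. y j \<in> {-1/2..1/2}}"

definition Fidx :: "(nat \<Rightarrow> nat) set" where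
  "Fidx = {\<nu>. finite {j. \<nu> j \<noteq> 0}}"

definition mi_abs :: "(nat \<Rightarrow> nat) \<Rightarrow> nat" where
  "mi_abs \<nu> = (\<Sum>j\<in>{j. \<nu> j \<noteq> 0}. \<nu> j)"

definition mi_pow :: "(nat \<Rightarrow> real) \<Rightarrow> (nat \<Rightarrow> nat) \<Rightarrow> real" where
  "mi_pow b \<nu> = (\<Prod>j\<in>{j. \<nu> j \<noteq> 0}. b j ^ \<nu> j)"

definition pdiff :: "nat \<Rightarrow> ((nat \<Rightarrow> real) \<Rightarrow> 'a::real_normed_vector) \<Rightarrow> (nat \<Rightarrow> real) \<Rightarrow> 'a" where
  "pdiff j F y = vector_derivative (\<lambda>h. F (y(j := y j + h)))
      (at 0 within {h. y(j := y j + h) \<in> Upar})"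

definition mixed_deriv :: "(nat \<Rightarrow> nat) \<Rightarrow> ((nat \<Rightarrow> real) \<Rightarrow> 'a::real_normed_vector) \<Rightarrow> (nat \<Rightarrow> real) \<Rightarrow> 'a" where
  "mixed_deriv \<nu> F = fold (\<lambda>j G. (pdiff j ^^ \<nu> j) G) (sorted_list_of_set {j. \<nu> j \<noteq> 0}) F"

end

theory Submission
  imports Defs
begin

text \<open>The functional is \<Phi> = B(D 0, D 0) for the bilinear form
  B(p, q) = \<alpha>1/2 \<langle>Lv p, Lv q\<rangle> + \<alpha>2/2 \<langle>ET p, ET q\<rangle>, which satisfies |B(p, q)| \<le> K |p| |q| with
  K = (\<alpha>1 + \<alpha>2 |ET|^2)/2, and the family D m = \<partial>^m (u - uhat), which satisfies
  |D m| \<le> C |m|! b^m with C = |f|/\<beta>1 + |uhat|. Spelling \<nu> as a word of n = |\<nu>| coordinates,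
  the Leibniz rule expands \<partial>^\<nu> \<Phi> into 2^n terms B(D m(S), D m(S')), one for every set S of
  positions with complement S', each bounded by K C^2 |S|! (n - |S|)! b^\<nu>. Grouping the sets by
  size gives \<Sum>k (n choose k) k! (n - k)! = (n + 1)!.\<close>

lemma mi_abs_eq_sum:
  "finite B \<Longrightarrow> {j. \<nu> j \<noteq> 0} \<subseteq> B \<Longrightarrow> mi_abs \<nu> = (\<Sum>j\<in>B. \<nu> j)"
  unfolding mi_abs_def by (rule sum.mono_neutral_left) auto

lemma mi_pow_eq_prod:
  "finite B \<Longrightarrow> {j. \<nu> j \<noteq> 0} \<subseteq> B \<Longrightarrow> mi_pow b \<nu> = (\<Prod>j\<in>B. b j ^ \<nu> j)"
  unfolding mi_pow_def by (rule prod.mono_neutral_left) auto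

lemma Fidx_inc: "\<nu> \<in> Fidx \<Longrightarrow> \<nu>(J := Suc (\<nu> J)) \<in> Fidx"
  unfolding Fidx_def by (auto intro: finite_subset[of _ "insert J {j. \<nu> j \<noteq> 0}"])

lemma mi_abs_inc:
  assumes "\<nu> \<in> Fidx"
  shows "mi_abs (\<nu>(J := Suc (\<nu> J))) = Suc (mi_abs \<nu>)"
proof -
  define B where "B = insert J {j. \<nu> j \<noteq> 0}"
  have fin: "finite B" using assms by (simp add: B_def Fidx_def)
  have "mi_abs (\<nu>(J := Suc (\<nu> J))) = (\<Sum>j\<in>B. (\<nu>(J := Suc (\<nu> J))) j)"
    by (rule mi_abs_eq_sum[OF fin]) (auto simp: B_def)
  also have "\<dots> = Suc (\<Sum>j\<in>B. \<nu> j)"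
    using fin by (simp add: B_def sum.insert_remove sum.remove)
  also have "(\<Sum>j\<in>B. \<nu> j) = mi_abs \<nu>"
    by (rule mi_abs_eq_sum[OF fin, symmetric]) (auto simp: B_def)
  finally show ?thesis .
qed

lemma mi_pow_inc:
  assumes "\<nu> \<in> Fidx"
  shows "mi_pow b (\<nu>(J := Suc (\<nu> J))) = b J * mi_pow b \<nu>"
proof -
  define B where "B = insert J {j. \<nu> j \<noteq> 0}"
  have fin: "finite B" using assms by (simp add: B_def Fidx_def)
  have "mi_pow b (\<nu>(J := Suc (\<nu> J))) = (\<Prod>j\<in>B. b j ^ (\<nu>(J := Suc (\<nu> J))) j)"
    by (rule mi_pow_eq_prod[OF fin]) (auto simp: B_def)
  also have "\<dots> = b J * (\<Prod>j\<in>B. b j ^ \<nu> j)"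
    using fin by (simp add: B_def prod.insert_remove prod.remove mult_ac)
  also have "(\<Prod>j\<in>B. b j ^ \<nu> j) = mi_pow b \<nu>"
    by (rule mi_pow_eq_prod[OF fin, symmetric]) (auto simp: B_def)
  finally show ?thesis .
qed

lemma mi_abs_eq_0: "\<nu> \<in> Fidx \<Longrightarrow> mi_abs \<nu> = 0 \<Longrightarrow> \<nu> = (\<lambda>_. 0)"
  unfolding mi_abs_def Fidx_def by (auto simp: sum_eq_0_iff)

definition mi_count :: "(nat \<Rightarrow> nat) \<Rightarrow> nat set \<Rightarrow> nat \<Rightarrow> nat" where
  "mi_count \<sigma> S j = card {i\<in>S. \<sigma> i = j}"

lemma mi_count_empty [simp]: "mi_count \<sigma> {} = (\<lambda>_. 0)"
  by (simp add: mi_count_def fun_eq_iff)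

lemma mi_count_insert:
  assumes "finite S" "i \<notin> S"
  shows "mi_count \<sigma> (insert i S) = (mi_count \<sigma> S)(\<sigma> i := Suc (mi_count \<sigma> S (\<sigma> i)))"
proof
  fix j
  have "{k\<in>insert i S. \<sigma> k = j} = (if \<sigma> i = j then insert i {k\<in>S. \<sigma> k = j} else {k\<in>S. \<sigma> k = j})"
    by auto
  then show "mi_count \<sigma> (insert i S) j = ((mi_count \<sigma> S)(\<sigma> i := Suc (mi_count \<sigma> S (\<sigma> i)))) j"
    using assms by (simp add: mi_count_def)
qed

lemma mi_count_cong: "(\<And>i. i \<in> S \<Longrightarrow> \<sigma> i = \<tau> i) \<Longrightarrow> mi_count \<sigma> S = mi_count \<tau> S"
  unfolding mi_count_def by (intro ext arg_cong[where f=card]) auto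

lemma mi_count_Fidx:
  assumes "finite S"
  shows "mi_count \<sigma> S \<in> Fidx"
proof -
  have "{j. mi_count \<sigma> S j \<noteq> 0} \<subseteq> \<sigma> ` S"
    by (auto simp: mi_count_def card_gt_0_iff)
  then show ?thesis
    unfolding Fidx_def using assms finite_subset by blast
qed

lemma mi_abs_mi_count: "finite S \<Longrightarrow> mi_abs (mi_count \<sigma> S) = card S"
proof (induction S rule: finite_induct)
  case empty
  then show ?case by (simp add: mi_abs_def)
next
  case (insert i S)
  then show ?case by (simp add: mi_count_insert mi_abs_inc mi_count_Fidx del: fun_upd_apply)
qed

lemma mi_pow_mi_count: "finite S \<Longrightarrow> mi_pow b (mi_count \<sigma> S) = (\<Prod>i\<in>S. b (\<sigma> i))"
proof (induction S rule: finite_induct)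
  case empty
  then show ?case by (simp add: mi_pow_def)
next
  case (insert i S)
  then show ?case by (simp add: mi_count_insert mi_pow_inc mi_count_Fidx del: fun_upd_apply)
qed

lemma sum_Pow_insert:
  assumes "finite A" "k \<notin> A"
  shows "sum F (Pow (insert k A)) = sum F (Pow A) + (\<Sum>S\<in>Pow A. F (insert k S))"
proof -
  have "inj_on (insert k) (Pow A)"
    using assms(2) by (intro inj_onI) (metis Diff_insert_absorb PowD subset_iff)
  moreover have "Pow A \<inter> insert k ` Pow A = {}" using assms(2) by auto
  ultimately show ?thesis
    using assms(1) by (simp add: Pow_insert sum.union_disjoint sum.reindex)
qed

lemma sum_Pow_insert_mi_count:
  assumes A: "finite A" "k \<notin> A"
  shows "(\<Sum>S\<in>Pow (insert k A). G (mi_count (\<sigma>(k := J)) S) (mi_count (\<sigma>(k := J)) (insert k A - S)))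
    = (\<Sum>S\<in>Pow A. G ((mi_count \<sigma> S)(J := Suc (mi_count \<sigma> S J))) (mi_count \<sigma> (A - S))
                  + G (mi_count \<sigma> S) ((mi_count \<sigma> (A - S))(J := Suc (mi_count \<sigma> (A - S) J))))"
proof -
  have old: "mi_count (\<sigma>(k := J)) T = mi_count \<sigma> T" if "T \<subseteq> A" for T
    using that A(2) by (intro mi_count_cong) auto
  have new: "mi_count (\<sigma>(k := J)) (insert k T) = (mi_count \<sigma> T)(J := Suc (mi_count \<sigma> T J))"
    if "T \<subseteq> A" for T
  proof -
    have "finite T" "k \<notin> T" using that A finite_subset by auto
    then show ?thesis unfolding mi_count_insert[OF \<open>finite T\<close> \<open>k \<notin> T\<close>] old[OF that] by simp
  qed
  have "sum (\<lambda>S. G (mi_count (\<sigma>(k := J)) S) (mi_count (\<sigma>(k := J)) (insert k A - S))) (Pow A)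
      = (\<Sum>S\<in>Pow A. G (mi_count \<sigma> S) ((mi_count \<sigma> (A - S))(J := Suc (mi_count \<sigma> (A - S) J))))"
  proof (rule sum.cong[OF refl])
    fix S assume "S \<in> Pow A"
    moreover have "insert k A - S = insert k (A - S)" using \<open>S \<in> Pow A\<close> A(2) by auto
    ultimately show "G (mi_count (\<sigma>(k := J)) S) (mi_count (\<sigma>(k := J)) (insert k A - S))
        = G (mi_count \<sigma> S) ((mi_count \<sigma> (A - S))(J := Suc (mi_count \<sigma> (A - S) J)))"
      by (simp add: old new)
  qed
  moreover have "(\<Sum>S\<in>Pow A. G (mi_count (\<sigma>(k := J)) (insert k S)) (mi_count (\<sigma>(k := J)) (insert k A - insert k S)))
      = (\<Sum>S\<in>Pow A. G ((mi_count \<sigma> S)(J := Suc (mi_count \<sigma> S J))) (mi_count \<sigma> (A - S)))"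
  proof (rule sum.cong[OF refl])
    fix S assume "S \<in> Pow A"
    moreover have "insert k A - insert k S = A - S" using \<open>S \<in> Pow A\<close> A(2) by auto
    ultimately show "G (mi_count (\<sigma>(k := J)) (insert k S)) (mi_count (\<sigma>(k := J)) (insert k A - insert k S))
        = G ((mi_count \<sigma> S)(J := Suc (mi_count \<sigma> S J))) (mi_count \<sigma> (A - S))"
      by (simp add: old new)
  qed
  ultimately show ?thesis
    unfolding sum_Pow_insert[OF A] sum.distrib by (simp only: add.commute)
qed

lemma sum_Pow_fact:
  assumes "finite A"
  shows "(\<Sum>S\<in>Pow A. fact (card S) * fact (card A - card S) :: real) = fact (Suc (card A))"
proof -
  let ?n = "card A"
  have "(\<Sum>S\<in>Pow A. fact (card S) * fact (?n - card S) :: real)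
      = (\<Sum>k\<le>?n. \<Sum>S\<in>{S\<in>Pow A. card S = k}. fact (card S) * fact (?n - card S))"
    by (rule sum.group[symmetric]) (auto simp: assms card_mono)
  also have "\<dots> = (\<Sum>k\<le>?n. real (?n choose k) * (fact k * fact (?n - k)))"
  proof (rule sum.cong[OF refl])
    fix k
    have "{S\<in>Pow A. card S = k} = {S. S \<subseteq> A \<and> card S = k}" by auto
    then show "(\<Sum>S\<in>{S\<in>Pow A. card S = k}. fact (card S) * fact (?n - card S))
        = real (?n choose k) * (fact k * fact (?n - k))"
      using n_subsets[OF assms] by simp
  qed
  also have "\<dots> = (\<Sum>k\<le>?n. fact ?n)"
  proof (rule sum.cong[OF refl])
    fix k assume "k \<in> {..?n}"
    then have "fact k * fact (?n - k) * (?n choose k) = (fact ?n :: nat)"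
      by (simp add: binomial_fact_lemma)
    then show "real (?n choose k) * (fact k * fact (?n - k)) = fact ?n"
      by (metis (mono_tags, lifting) mult.commute of_nat_fact of_nat_mult)
  qed
  also have "\<dots> = fact (Suc ?n)" by (simp add: algebra_simps)
  finally show ?thesis .
qed

lemma mixed_deriv_zero [simp]: "mixed_deriv (\<lambda>_. 0) F = F"
  by (simp add: mixed_deriv_def)

lemma sorted_list_of_set_insert_greatest:
  fixes J :: "'a::linorder"
  assumes "finite A" "\<And>a. a \<in> A \<Longrightarrow> a < J"
  shows "sorted_list_of_set (insert J A) = sorted_list_of_set A @ [J]"
proof -
  have "J \<notin> A" using assms(2) by blast
  then have "length (sorted_list_of_set A @ [J]) = card (insert J A)"
    using assms(1) by simp
  moreover have "sorted_wrt (<) (sorted_list_of_set A @ [J])"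
    using assms by (simp add: sorted_wrt_append strict_sorted_list_of_set)
  moreover have "set (sorted_list_of_set A @ [J]) = insert J A" using assms(1) by simp
  ultimately show ?thesis
    using sorted_list_of_set_unique[of "insert J A"] assms(1) by blast
qed

lemma mixed_deriv_split_greatest:
  assumes "\<nu> \<in> Fidx" "\<And>j. \<nu> j \<noteq> 0 \<Longrightarrow> j \<le> J"
  shows "mixed_deriv \<nu> F
    = (pdiff J ^^ \<nu> J) (fold (\<lambda>j G. (pdiff j ^^ \<nu> j) G) (sorted_list_of_set ({j. \<nu> j \<noteq> 0} - {J})) F)"
proof (cases "\<nu> J = 0")
  case True
  then have "{j. \<nu> j \<noteq> 0} - {J} = {j. \<nu> j \<noteq> 0}" by auto
  with True show ?thesis by (simp add: mixed_deriv_def)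
next
  case False
  have "finite ({j. \<nu> j \<noteq> 0} - {J})" using assms(1) by (simp add: Fidx_def)
  moreover have "{j. \<nu> j \<noteq> 0} = insert J ({j. \<nu> j \<noteq> 0} - {J})" using False by auto
  ultimately have "sorted_list_of_set {j. \<nu> j \<noteq> 0} = sorted_list_of_set ({j. \<nu> j \<noteq> 0} - {J}) @ [J]"
    using assms(2) sorted_list_of_set_insert_greatest by (metis (mono_tags) Diff_iff le_neq_trans mem_Collect_eq singletonI)
  then show ?thesis by (simp add: mixed_deriv_def)
qed

lemma mixed_deriv_inc_greatest:
  assumes "\<nu> \<in> Fidx" "\<And>j. \<nu> j \<noteq> 0 \<Longrightarrow> j \<le> J"
  shows "mixed_deriv (\<nu>(J := Suc (\<nu> J))) F = pdiff J (mixed_deriv \<nu> F)"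
proof -
  let ?\<mu> = "\<nu>(J := Suc (\<nu> J))"
  let ?L = "sorted_list_of_set ({j. \<nu> j \<noteq> 0} - {J})"
  have supp: "{j. ?\<mu> j \<noteq> 0} - {J} = {j. \<nu> j \<noteq> 0} - {J}" by auto
  have "fold (\<lambda>j G. (pdiff j ^^ ?\<mu> j) G) ?L F = fold (\<lambda>j G. (pdiff j ^^ \<nu> j) G) ?L F"
    using assms(1) by (intro fold_cong) (auto simp: Fidx_def)
  moreover have "mixed_deriv ?\<mu> F
      = (pdiff J ^^ ?\<mu> J) (fold (\<lambda>j G. (pdiff j ^^ ?\<mu> j) G) (sorted_list_of_set ({j. ?\<mu> j \<noteq> 0} - {J})) F)"
    by (rule mixed_deriv_split_greatest) (use assms in \<open>auto simp: Fidx_inc split: if_splits\<close>)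
  ultimately show ?thesis
    unfolding supp using mixed_deriv_split_greatest[OF assms, of F] by simp
qed

lemma Upar_line:
  "y \<in> Upar \<Longrightarrow> {h. y(J := y J + h) \<in> Upar} = {-1/2 - y J .. 1/2 - y J}"
  unfolding Upar_def by (auto simp: fun_upd_def split: if_splits)

text \<open>The line through y in direction J meets U in a nondegenerate interval, so the one-sided
  derivative defining pdiff is unique.\<close>
lemma pdiff_eqI:
  assumes y: "y \<in> Upar"
    and eq: "\<And>h. y(J := y J + h) \<in> Upar \<Longrightarrow> F (y(J := y J + h)) = R h"
    and R: "(R has_vector_derivative R') (at 0 within {h. y(J := y J + h) \<in> Upar})"
  shows "pdiff J F y = R'"
proof -
  let ?I = "cbox (-1/2 - y J) (1/2 - y J)"
  have line: "{h. y(J := y J + h) \<in> Upar} = ?I" using Upar_line[OF y] by simp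
  have "0 \<in> ?I" using y by (simp add: Upar_def)
  have "((\<lambda>h. F (y(J := y J + h))) has_vector_derivative R') (at 0 within ?I)"
  proof (rule has_vector_derivative_transform_within[where d=1, OF R[unfolded line] _ \<open>0 \<in> ?I\<close>])
    fix h assume "h \<in> ?I"
    then have "y(J := y J + h) \<in> Upar" by (metis line mem_Collect_eq)
    then show "R h = F (y(J := y J + h))" by (simp add: eq)
  qed simp
  then show ?thesis
    unfolding pdiff_def line using vector_derivative_within_cbox[OF _ \<open>0 \<in> ?I\<close>] by simp
qed

text \<open>A word \<sigma> of length |\<nu>| lists the coordinates to be differentiated; mi_count \<sigma> S is the
  multi-index of its letters at the positions in S.\<close>
definition leibniz_word_sum ::
    "('a \<Rightarrow> 'b \<Rightarrow> 'c::real_normed_vector) \<Rightarrow> ((nat \<Rightarrow> nat) \<Rightarrow> 'y \<Rightarrow> 'a) \<Rightarrow> ((nat \<Rightarrow> nat) \<Rightarrow> 'y \<Rightarrow> 'b)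
      \<Rightarrow> (nat \<Rightarrow> nat) \<Rightarrow> nat set \<Rightarrow> 'y \<Rightarrow> 'c" where
  "leibniz_word_sum B D E \<sigma> A y = (\<Sum>S\<in>Pow A. B (D (mi_count \<sigma> S) y) (E (mi_count \<sigma> (A - S)) y))"

lemma leibniz_word_sum_has_vector_derivative:
  assumes B: "bounded_bilinear B"
    and D: "\<And>m. m \<in> Fidx \<Longrightarrow> ((\<lambda>h. D m (y(J := y J + h))) has_vector_derivative D (m(J := Suc (m J))) y)
              (at 0 within {h. y(J := y J + h) \<in> Upar})"
    and E: "\<And>m. m \<in> Fidx \<Longrightarrow> ((\<lambda>h. E m (y(J := y J + h))) has_vector_derivative E (m(J := Suc (m J))) y)
              (at 0 within {h. y(J := y J + h) \<in> Upar})"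
    and A: "finite A" "k \<notin> A"
  shows "((\<lambda>h. leibniz_word_sum B D E \<sigma> A (y(J := y J + h))) has_vector_derivative
           leibniz_word_sum B D E (\<sigma>(k := J)) (insert k A) y) (at 0 within {h. y(J := y J + h) \<in> Upar})"
  unfolding leibniz_word_sum_def sum_Pow_insert_mi_count[OF A, of "\<lambda>m m'. B (D m y) (E m' y)"]
proof (rule has_vector_derivative_sum)
  fix S assume "S \<in> Pow A"
  then have "mi_count \<sigma> S \<in> Fidx" "mi_count \<sigma> (A - S) \<in> Fidx"
    using A(1) finite_subset by (auto intro: mi_count_Fidx)
  from bounded_bilinear.has_vector_derivative[OF B D[OF this(1)] E[OF this(2)]]
  show "((\<lambda>h. B (D (mi_count \<sigma> S) (y(J := y J + h))) (E (mi_count \<sigma> (A - S)) (y(J := y J + h))))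
      has_vector_derivative
        B (D ((mi_count \<sigma> S)(J := Suc (mi_count \<sigma> S J))) y) (E (mi_count \<sigma> (A - S)) y)
      + B (D (mi_count \<sigma> S) y) (E ((mi_count \<sigma> (A - S))(J := Suc (mi_count \<sigma> (A - S) J))) y))
      (at 0 within {h. y(J := y J + h) \<in> Upar})"
    by (rule has_vector_derivative_eq_rhs) (simp add: add.commute)
qed

lemma mixed_deriv_bilinear_expansion:
  fixes B :: "'a::real_normed_vector \<Rightarrow> 'b::real_normed_vector \<Rightarrow> 'c::real_normed_vector"
  assumes B: "bounded_bilinear B"
    and D: "\<And>m j y. m \<in> Fidx \<Longrightarrow> y \<in> Upar \<Longrightarrow>
        ((\<lambda>h. D m (y(j := y j + h))) has_vector_derivative D (m(j := Suc (m j))) y)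
          (at 0 within {h. y(j := y j + h) \<in> Upar})"
    and E: "\<And>m j y. m \<in> Fidx \<Longrightarrow> y \<in> Upar \<Longrightarrow>
        ((\<lambda>h. E m (y(j := y j + h))) has_vector_derivative E (m(j := Suc (m j))) y)
          (at 0 within {h. y(j := y j + h) \<in> Upar})"
  shows "\<nu> \<in> Fidx \<Longrightarrow> \<exists>\<sigma>. mi_count \<sigma> {..<mi_abs \<nu>} = \<nu> \<and>
     (\<forall>y\<in>Upar. mixed_deriv \<nu> (\<lambda>y. B (D (\<lambda>_. 0) y) (E (\<lambda>_. 0) y)) y
                = leibniz_word_sum B D E \<sigma> {..<mi_abs \<nu>} y)"
proof (induction "mi_abs \<nu>" arbitrary: \<nu>)
  case 0
  then have "\<nu> = (\<lambda>_. 0)" by (simp add: mi_abs_eq_0)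
  with 0 show ?case by (simp add: leibniz_word_sum_def)
next
  case (Suc k)
  define J where "J = Max {j. \<nu> j \<noteq> 0}"
  define \<nu>' where "\<nu>' = \<nu>(J := \<nu> J - 1)"
  have fin: "finite {j. \<nu> j \<noteq> 0}" using Suc.prems by (simp add: Fidx_def)
  have "{j. \<nu> j \<noteq> 0} \<noteq> {}" using Suc.hyps(2) by (metis mi_abs_def nat.distinct(1) sum.empty)
  then have "\<nu> J \<noteq> 0" using fin Max_in J_def by blast
  then have \<nu>: "\<nu> = \<nu>'(J := Suc (\<nu>' J))" by (auto simp: \<nu>'_def)
  have \<nu>': "\<nu>' \<in> Fidx" using Suc.prems fin by (auto simp: Fidx_def \<nu>'_def elim: finite_subset[rotated])
  have greatest: "\<nu>' j \<noteq> 0 \<Longrightarrow> j \<le> J" for j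
    using fin by (auto simp: J_def \<nu>'_def split: if_splits)
  have "mi_abs \<nu>' = k" using Suc.hyps(2) mi_abs_inc[OF \<nu>', of J] \<nu> by simp
  then obtain \<sigma> where \<sigma>: "mi_count \<sigma> {..<k} = \<nu>'"
    and IH: "\<And>y. y \<in> Upar \<Longrightarrow> mixed_deriv \<nu>' (\<lambda>y. B (D (\<lambda>_. 0) y) (E (\<lambda>_. 0) y)) y
                = leibniz_word_sum B D E \<sigma> {..<k} y"
    using Suc.hyps(1) \<nu>' by blast
  have word: "{..<mi_abs \<nu>} = insert k {..<k}" using Suc.hyps(2) by auto
  show ?case
  proof (intro exI conjI ballI)
    have "mi_count (\<sigma>(k := J)) {..<k} = mi_count \<sigma> {..<k}" by (rule mi_count_cong) simp
    then show "mi_count (\<sigma>(k := J)) {..<mi_abs \<nu>} = \<nu>"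
      unfolding word by (subst \<nu>) (simp add: mi_count_insert \<sigma>)
    fix y assume y: "y \<in> Upar"
    have "mixed_deriv \<nu> (\<lambda>y. B (D (\<lambda>_. 0) y) (E (\<lambda>_. 0) y)) y
        = pdiff J (mixed_deriv \<nu>' (\<lambda>y. B (D (\<lambda>_. 0) y) (E (\<lambda>_. 0) y))) y"
      by (subst \<nu>) (simp add: mixed_deriv_inc_greatest[OF \<nu>' greatest])
    also have "\<dots> = leibniz_word_sum B D E (\<sigma>(k := J)) {..<mi_abs \<nu>} y"
      unfolding word
      by (rule pdiff_eqI[OF y IH leibniz_word_sum_has_vector_derivative[where D=D and E=E,
            OF B D[where j=J, OF _ y] E[where j=J, OF _ y]]])
          (simp_all del: fun_upd_apply)
    finally show "mixed_deriv \<nu> (\<lambda>y. B (D (\<lambda>_. 0) y) (E (\<lambda>_. 0) y)) y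
        = leibniz_word_sum B D E (\<sigma>(k := J)) {..<mi_abs \<nu>} y" .
  qed
qed

lemma mixed_deriv_bilinear_bound:
  fixes B :: "'a::real_normed_vector \<Rightarrow> 'b::real_normed_vector \<Rightarrow> 'c::real_normed_vector"
  assumes B: "bounded_bilinear B"
    and D: "\<And>m j y. m \<in> Fidx \<Longrightarrow> y \<in> Upar \<Longrightarrow>
        ((\<lambda>h. D m (y(j := y j + h))) has_vector_derivative D (m(j := Suc (m j))) y)
          (at 0 within {h. y(j := y j + h) \<in> Upar})"
    and E: "\<And>m j y. m \<in> Fidx \<Longrightarrow> y \<in> Upar \<Longrightarrow>
        ((\<lambda>h. E m (y(j := y j + h))) has_vector_derivative E (m(j := Suc (m j))) y)
          (at 0 within {h. y(j := y j + h) \<in> Upar})"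
    and B_bound: "\<And>p q. norm (B p q) \<le> K * norm p * norm q" and K: "K \<ge> 0"
    and D_bound: "\<And>m y. m \<in> Fidx \<Longrightarrow> y \<in> Upar \<Longrightarrow> norm (D m y) \<le> C * fact (mi_abs m) * mi_pow b m"
    and E_bound: "\<And>m y. m \<in> Fidx \<Longrightarrow> y \<in> Upar \<Longrightarrow> norm (E m y) \<le> C' * fact (mi_abs m) * mi_pow b m"
    and \<nu>: "\<nu> \<in> Fidx" and y: "y \<in> Upar"
  shows "norm (mixed_deriv \<nu> (\<lambda>y. B (D (\<lambda>_. 0) y) (E (\<lambda>_. 0) y)) y)
           \<le> K * C * C' * fact (mi_abs \<nu> + 1) * mi_pow b \<nu>"
proof -
  define n where "n = mi_abs \<nu>"
  obtain \<sigma> where \<sigma>: "mi_count \<sigma> {..<n} = \<nu>"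
    and expansion: "mixed_deriv \<nu> (\<lambda>y. B (D (\<lambda>_. 0) y) (E (\<lambda>_. 0) y)) y = leibniz_word_sum B D E \<sigma> {..<n} y"
    using mixed_deriv_bilinear_expansion[OF B D E \<nu>] y unfolding n_def by blast
  have term_bound: "norm (B (D (mi_count \<sigma> S) y) (E (mi_count \<sigma> ({..<n} - S)) y))
      \<le> K * C * C' * mi_pow b \<nu> * (fact (card S) * fact (n - card S))" if "S \<subseteq> {..<n}" for S
  proof -
    have fin: "finite S" "finite ({..<n} - S)" using that finite_subset by auto
    have card: "card ({..<n} - S) = n - card S" using that fin(1) by (simp add: card_Diff_subset)
    have pow: "mi_pow b (mi_count \<sigma> S) * mi_pow b (mi_count \<sigma> ({..<n} - S)) = mi_pow b \<nu>"
      using that prod.subset_diff[OF that, of "\<lambda>i. b (\<sigma> i)"]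
      by (simp add: mi_pow_mi_count fin flip: \<sigma>)
    have D_S: "norm (D (mi_count \<sigma> S) y) \<le> C * fact (card S) * mi_pow b (mi_count \<sigma> S)"
      using D_bound[OF mi_count_Fidx[OF fin(1)] y] by (simp add: mi_abs_mi_count fin)
    have E_S: "norm (E (mi_count \<sigma> ({..<n} - S)) y)
        \<le> C' * fact (n - card S) * mi_pow b (mi_count \<sigma> ({..<n} - S))"
      using E_bound[OF mi_count_Fidx[OF fin(2)] y] by (simp add: mi_abs_mi_count fin card)
    have "norm (B (D (mi_count \<sigma> S) y) (E (mi_count \<sigma> ({..<n} - S)) y))
        \<le> K * norm (D (mi_count \<sigma> S) y) * norm (E (mi_count \<sigma> ({..<n} - S)) y)"
      by (rule B_bound)
    also have "\<dots> \<le> K * (C * fact (card S) * mi_pow b (mi_count \<sigma> S))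
        * (C' * fact (n - card S) * mi_pow b (mi_count \<sigma> ({..<n} - S)))"
      using order_trans[OF norm_ge_zero D_S] K by (intro mult_mono mult_left_mono D_S E_S) auto
    also have "\<dots> = K * C * C' * mi_pow b \<nu> * (fact (card S) * fact (n - card S))"
      by (simp flip: pow add: algebra_simps)
    finally show ?thesis .
  qed
  have "norm (leibniz_word_sum B D E \<sigma> {..<n} y)
      \<le> (\<Sum>S\<in>Pow {..<n}. K * C * C' * mi_pow b \<nu> * (fact (card S) * fact (n - card S)))"
    unfolding leibniz_word_sum_def by (rule sum_norm_le) (simp add: term_bound)
  also have "\<dots> = K * C * C' * mi_pow b \<nu> * fact (Suc n)"
    unfolding sum_distrib_left[symmetric] using sum_Pow_fact[of "{..<n}"] by simp
  finally show ?thesis by (simp add: expansion n_def algebra_simps)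
qed

lemma abs_inner_image_le:
  assumes "\<And>v. norm (f v) \<le> M * norm v"
  shows "\<bar>f p \<bullet> f q\<bar> \<le> M\<^sup>2 * norm p * norm q"
proof -
  have "\<bar>f p \<bullet> f q\<bar> \<le> norm (f p) * norm (f q)" by (rule Cauchy_Schwarz_ineq2)
  also have "\<dots> \<le> (M * norm p) * (M * norm q)"
    using assms by (intro mult_mono) (auto intro: order_trans[OF norm_ge_zero])
  finally show ?thesis by (simp add: power2_eq_square algebra_simps)
qed

lemma weighted_inner_bound:
  assumes "\<And>v. norm (f v) \<le> M * norm v" "\<And>v. norm (g v) \<le> N * norm v" "a \<ge> 0" "c \<ge> 0"
  shows "\<bar>a * (f p \<bullet> f q) + c * (g p \<bullet> g q)\<bar> \<le> (a * M\<^sup>2 + c * N\<^sup>2) * norm p * norm q"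
proof -
  have "\<bar>a * (f p \<bullet> f q) + c * (g p \<bullet> g q)\<bar> \<le> a * \<bar>f p \<bullet> f q\<bar> + c * \<bar>g p \<bullet> g q\<bar>"
    using assms(3,4) by (simp add: abs_mult abs_triangle_ineq[THEN order_trans])
  also have "\<dots> \<le> a * (M\<^sup>2 * norm p * norm q) + c * (N\<^sup>2 * norm p * norm q)"
    using assms by (intro add_mono mult_left_mono abs_inner_image_le) auto
  finally show ?thesis by (simp add: algebra_simps)
qed

lemma bounded_bilinear_weighted_inner:
  assumes f: "bounded_linear f" and g: "bounded_linear g" and "a \<ge> 0" "c \<ge> 0"
  shows "bounded_bilinear (\<lambda>p q. a * (f p \<bullet> f q) + c * (g p \<bullet> g q))"
proof
  show "\<exists>K. \<forall>p q. norm (a * (f p \<bullet> f q) + c * (g p \<bullet> g q)) \<le> norm p * norm q * K"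
  proof -
    have "\<forall>p q. norm (a * (f p \<bullet> f q) + c * (g p \<bullet> g q))
        \<le> norm p * norm q * (a * (onorm f)\<^sup>2 + c * (onorm g)\<^sup>2)"
      using weighted_inner_bound[OF onorm[OF f] onorm[OF g] assms(3,4)] by (simp add: mult_ac)
    then show ?thesis by blast
  qed
qed (simp_all add: linear_add[OF bounded_linear.linear[OF f]] linear_add[OF bounded_linear.linear[OF g]]
      linear_scale[OF bounded_linear.linear[OF f]] linear_scale[OF bounded_linear.linear[OF g]]
      inner_add_left inner_add_right algebra_simps)

lemma mi_pow_nonneg: "(\<And>j. b j \<ge> 0) \<Longrightarrow> mi_pow b \<nu> \<ge> 0"
  unfolding mi_pow_def by (simp add: prod_nonneg)

lemma centered_mixed_deriv_has_vector_derivative: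
  assumes "((\<lambda>h. mixed_deriv m u (y(j := y j + h))) has_vector_derivative mixed_deriv (m(j := Suc (m j))) u y)
             (at 0 within S)"
  shows "((\<lambda>h. mixed_deriv m u (y(j := y j + h)) - (if m = (\<lambda>_. 0) then c else 0)) has_vector_derivative
           mixed_deriv (m(j := Suc (m j))) u y - (if m(j := Suc (m j)) = (\<lambda>_. 0) then c else 0))
           (at 0 within S)"
proof -
  have "m(j := Suc (m j)) \<noteq> (\<lambda>_. 0)" by (metis fun_upd_same nat.distinct(1))
  then show ?thesis
    using has_vector_derivative_diff[OF assms has_vector_derivative_const] by simp
qed

lemma centered_mixed_deriv_bound:
  assumes "norm (mixed_deriv m u y) \<le> A * fact (mi_abs m) * mi_pow b m" "\<And>j. b j \<ge> 0"
  shows "norm (mixed_deriv m u y - (if m = (\<lambda>_. 0) then c else 0)) \<le> (A + norm c) * fact (mi_abs m) * mi_pow b m"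
proof (cases "m = (\<lambda>_. 0)")
  case True
  then have "norm (mixed_deriv m u y) \<le> A" using assms(1) by (simp add: mi_abs_def mi_pow_def)
  with True show ?thesis
    by (simp add: mi_abs_def mi_pow_def norm_triangle_le_diff)
next
  case False
  have "0 \<le> fact (mi_abs m) * mi_pow b m" using mi_pow_nonneg[OF assms(2)] by simp
  with False assms(1) show ?thesis
    by (simp add: distrib_right mult.assoc) (smt (verit) mult_nonneg_nonneg norm_ge_zero)
qed

theorem mainTheorem10:
  fixes u :: "(nat \<Rightarrow> real) \<Rightarrow> 'x::real_normed_vector"
    and uhat :: 'x
    and Lv :: "'x \<Rightarrow> 'h1::real_inner"
    and Dt :: "'x \<Rightarrow> 'h3::real_normed_vector"
    and ET :: "'x \<Rightarrow> 'h2::real_inner"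
    and f :: "'f::real_normed_vector"
    and beta1 alpha1 alpha2 :: real
    and b :: "nat \<Rightarrow> real"
  assumes Lv_lin: "linear Lv" and Dt_lin: "linear Dt"
    and X_norm: "\<And>v. norm v ^ 2 = norm (Lv v) ^ 2 + norm (Dt v) ^ 2"
    and ET_bl: "bounded_linear ET"
    and beta1_pos: "beta1 > 0"
    and b_nonneg: "\<And>j. b j \<ge> 0" and b_summable: "summable b"
    and alpha: "alpha1 \<ge> 0" "alpha2 \<ge> 0" "alpha1 + alpha2 > 0"
    and u_smooth: "\<And>\<nu> j y. \<nu> \<in> Fidx \<Longrightarrow> y \<in> Upar \<Longrightarrow>
        ((\<lambda>h. mixed_deriv \<nu> u (y(j := y j + h))) has_vector_derivative
           mixed_deriv (\<nu>(j := Suc (\<nu> j))) u y)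
        (at 0 within {h. y(j := y j + h) \<in> Upar})"
    and u_bound: "\<And>\<nu> y. \<nu> \<in> Fidx \<Longrightarrow> y \<in> Upar \<Longrightarrow>
        norm (mixed_deriv \<nu> u y) \<le> norm f / beta1 * fact (mi_abs \<nu>) * mi_pow b \<nu>"
  shows "\<forall>y\<in>Upar. \<forall>\<nu>\<in>Fidx.
    \<bar>mixed_deriv \<nu>
        (\<lambda>y'. alpha1 / 2 * norm (Lv (u y' - uhat)) ^ 2 + alpha2 / 2 * norm (ET (u y' - uhat)) ^ 2) y\<bar>
    \<le> (alpha1 + alpha2 * (onorm ET) ^ 2) / 2 * (norm f / beta1 + norm uhat) ^ 2
       * fact (mi_abs \<nu> + 1) * mi_pow b \<nu>"
proof (intro ballI)
  fix y \<nu> assume y: "y \<in> Upar" and \<nu>: "\<nu> \<in> Fidx"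
  have Lv_le: "norm (Lv v) \<le> 1 * norm v" for v
    using X_norm[of v] by (simp add: power2_le_imp_le)
  then have Lv_bl: "bounded_linear Lv"
    using Lv_lin by (simp add: bounded_linear_intro[where K=1] linear_add linear_scale mult.commute)
  define B where "B p q = alpha1 / 2 * (Lv p \<bullet> Lv q) + alpha2 / 2 * (ET p \<bullet> ET q)" for p q
  define D where "D m y = mixed_deriv m u y - (if m = (\<lambda>_. 0) then uhat else 0)" for m y
  have B_bound: "norm (B p q) \<le> (alpha1 + alpha2 * (onorm ET)\<^sup>2) / 2 * norm p * norm q" for p q
    using weighted_inner_bound[OF Lv_le onorm[OF ET_bl], where a="alpha1 / 2" and c="alpha2 / 2"] alpha(1,2)
    by (simp add: B_def add_divide_distrib)
  have B_bil: "bounded_bilinear B"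
    unfolding B_def[abs_def] using alpha(1,2) by (intro bounded_bilinear_weighted_inner[OF Lv_bl ET_bl]) simp_all
  have D_deriv: "((\<lambda>h. D m (y(j := y j + h))) has_vector_derivative D (m(j := Suc (m j))) y)
      (at 0 within {h. y(j := y j + h) \<in> Upar})" if "m \<in> Fidx" "y \<in> Upar" for m j y
    unfolding D_def by (rule centered_mixed_deriv_has_vector_derivative[OF u_smooth[OF that]])
  have D_bound: "norm (D m y) \<le> (norm f / beta1 + norm uhat) * fact (mi_abs m) * mi_pow b m"
    if "m \<in> Fidx" "y \<in> Upar" for m y
    unfolding D_def by (rule centered_mixed_deriv_bound[OF u_bound[OF that] b_nonneg])
  have K: "(alpha1 + alpha2 * (onorm ET)\<^sup>2) / 2 \<ge> 0" using alpha(1,2) by simp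
  have "norm (mixed_deriv \<nu> (\<lambda>y. B (D (\<lambda>_. 0) y) (D (\<lambda>_. 0) y)) y)
      \<le> (alpha1 + alpha2 * (onorm ET)\<^sup>2) / 2 * (norm f / beta1 + norm uhat) * (norm f / beta1 + norm uhat)
         * fact (mi_abs \<nu> + 1) * mi_pow b \<nu>"
    by (rule mixed_deriv_bilinear_bound[OF B_bil D_deriv D_deriv B_bound K D_bound D_bound \<nu> y])
  moreover have "(\<lambda>y. B (D (\<lambda>_. 0) y) (D (\<lambda>_. 0) y))
      = (\<lambda>y'. alpha1 / 2 * norm (Lv (u y' - uhat)) ^ 2 + alpha2 / 2 * norm (ET (u y' - uhat)) ^ 2)"
    by (simp add: B_def D_def power2_norm_eq_inner)
  ultimately show "\<bar>mixed_deriv \<nu>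
        (\<lambda>y'. alpha1 / 2 * norm (Lv (u y' - uhat)) ^ 2 + alpha2 / 2 * norm (ET (u y' - uhat)) ^ 2) y\<bar>
    \<le> (alpha1 + alpha2 * (onorm ET) ^ 2) / 2 * (norm f / beta1 + norm uhat) ^ 2
       * fact (mi_abs \<nu> + 1) * mi_pow b \<nu>"
    by (simp add: power2_eq_square mult.assoc del: fact_Suc)
qed

end
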